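(* For the information exchange $\mathcal{E}$, failure model $SO_t$ and decision protocol $P'$ described in the context, $P'$ is an SBA protocol with respect to $\mathcal{E}$ and $SO_t$, i.e., in every run $r$ of $\mathcal{I}_{P',\mathcal{E},SO_t}$: (Unique-Decision) each agent performs an action $\mathtt{decide}_i(v)$ at most once; (Simultaneous-Agreement) if a nonfaulty agent $i$ performs $\mathtt{decide}_i(v)$ at time $m$ then every nonfaulty agent $j$ performs $\mathtt{decide}_j(v)$ at time $m$; (Validity) if a nonfaulty agent performs $\mathtt{decide}_i(v)$ then some agent has initial value $v$ in $r$.
   Context: Agents $\mathrm{Agt}=\{1,\dots,n\}$, a bound $t\le n$, decision values $V=\{0,1\}$, actions $A_i=\{\mathtt{noop},\mathtt{decide}_i(0),\mathtt{decide}_i(1)\}$. Information exchange $\mathcal{E}$: agent $i$'s local states are tuples $\langle\mathit{init}_i,\mathit{known}_i,\mathit{new}_i,\mathit{kfaulty}_i,\mathit{done}_i,\mathit{time}_i\rangle$ with $\mathit{init}_i\in\{0,1\}$, $\mathit{known}_i,\mathit{new}_i\subseteq\{0,1\}$, $\mathit{kfaulty}_i\subseteq\mathrm{Agt}$, $\mathit{done}_i\in\{0,1\}$, $\mathit{time}_i\in\mathbb{N}$; initial states have $\mathit{known}_i=\mathit{new}_i=\{\mathit{init}_i\}$, $\mathit{kfaulty}_i=\emptyset$, $\mathit{done}_i=\mathit{time}_i=0$. Messages are $\bot$ or pairs $\langle N,F\rangle$ with $N\subseteq\{0,1\}$, $F\subseteq\mathrm{Agt}$. In each round agent $i$ sends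 the same message to every agent $j\in\mathrm{Agt}$ (including itself): $\langle\emptyset,\emptyset\rangle$ if $\mathit{done}_i=1$ or its action is a $\mathtt{decide}$ action, and $\langle\mathit{new}_i,\mathit{kfaulty}_i\rangle$ otherwise. Update after action $a$ and receiving messages, where $J$ is the set of agents from which a (non-$\bot$) message $\langle N_j,F_j\rangle$ is received: $\mathit{init}$ unchanged; $\mathit{known}'_i=\mathit{known}_i\cup\bigcup_{j\in J}N_j$; $\mathit{new}'_i=\mathit{known}'_i\setminus\mathit{known}_i$; $\mathit{kfaulty}'_i=\mathit{kfaulty}_i\cup(\mathrm{Agt}\setminus J)\cup\bigcup_{j\in J}F_j$; $\mathit{done}'_i=1$ if $a$ is a $\mathtt{decide}$ action, else $\mathit{done}_i$; $\mathit{time}'_i=\mathit{time}_i+1$. Decision protocol $P'$: $P'_i(s)=\mathtt{decide}_i(v)$ if $\mathit{done}_i=0$, $v$ is the least element of $\mathit{known}_i$, and either $\mathit{time}_i=t+1$ or $\mathit{kfaulty}_i=\mathrm{Agt}\setminus\{i\}$; otherwise $P'_i(s)=\mathtt{noop}$. Failure model $SO_t$ (sending omissions): in each run there is a set of at most $t$ agents, and the only failures are that in any round, some messages sent by these agents (to any recipients, possibly themselves) may be lost (received as $\bot$); all other messages are delivered and local states evolve without perturbation. Runs of $\mathcal{I}_{P',\mathcal{E},SO_t}$ start from any combination of initial states and any such failure pattern; at each time $k$ each agent $i$ performs $P'_i$ of its current state, sends its messages, and updates its state from the messages it receives in round $k+1$. An agent is nonfaulty in a run if none of its messages is ever lost.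 *)

theory Defs
  imports Main
begin

definition Agt :: "nat \<Rightarrow> nat set" where
  "Agt n = {1..n}"

record lstate =
  s_init :: nat
  s_known :: "nat set"
  s_new :: "nat set"
  s_kfaulty :: "nat set"
  s_done :: nat
  s_time :: nat

datatype action = Noop | Decide nat

definition initial_state :: "nat \<Rightarrow> lstate" where
  "initial_state v = \<lparr>s_init = v, s_known = {v}, s_new = {v}, s_kfaulty = {},
                      s_done = 0, s_time = 0\<rparr>"

definition Pprime :: "nat \<Rightarrow> nat \<Rightarrow> nat \<Rightarrow> lstate \<Rightarrow> action" where
  "Pprime n t i s =
     (if s_done s = 0 \<and> (s_time s = t + 1 \<or> s_kfaulty s = Agt n - {i})
      then Decide (Min (s_known s)) else Noop)"

definition is_decide :: "action \<Rightarrow> bool" where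
  "is_decide a = (\<exists>v. a = Decide v)"

definition msg :: "lstate \<Rightarrow> action \<Rightarrow> nat set \<times> nat set" where
  "msg s a = (if s_done s = 1 \<or> is_decide a then ({}, {}) else (s_new s, s_kfaulty s))"

text \<open>State update; rcv j = None means the message from j was lost (bottom).\<close>
definition update :: "nat \<Rightarrow> lstate \<Rightarrow> action \<Rightarrow> (nat \<Rightarrow> (nat set \<times> nat set) option) \<Rightarrow> lstate" where
  "update n s a rcv =
     (let J = {j \<in> Agt n. rcv j \<noteq> None};
          known' = s_known s \<union> (\<Union>j\<in>J. fst (the (rcv j)))
      in \<lparr>s_init = s_init s,
          s_known = known',
          s_new = known' - s_known s,
          s_kfaulty = s_kfaulty s \<union> (Agt n - J) \<union> (\<Union>j\<in>J. snd (the (rcv j))),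
          s_done = (if is_decide a then 1 else s_done s),
          s_time = Suc (s_time s)\<rparr>)"

text \<open>Global state of the run at time k: ini gives initial values,
  lost k j i means the message sent by j to i in round k+1 (after time k) is lost.\<close>
primrec run_states :: "nat \<Rightarrow> nat \<Rightarrow> (nat \<Rightarrow> nat) \<Rightarrow> (nat \<Rightarrow> nat \<Rightarrow> nat \<Rightarrow> bool)
                         \<Rightarrow> nat \<Rightarrow> nat \<Rightarrow> lstate" where
  "run_states n t ini lost 0 = (\<lambda>i. initial_state (ini i))"
| "run_states n t ini lost (Suc k) =
     (\<lambda>i. update n (run_states n t ini lost k i)
                    (Pprime n t i (run_states n t ini lost k i))
                    (\<lambda>j. if lost k j i then None
                         else Some (msg (run_states n t ini lost k j)
                                        (Pprime n t j (run_states n t ini lost k j)))))"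

definition run_action :: "nat \<Rightarrow> nat \<Rightarrow> (nat \<Rightarrow> nat) \<Rightarrow> (nat \<Rightarrow> nat \<Rightarrow> nat \<Rightarrow> bool)
                         \<Rightarrow> nat \<Rightarrow> nat \<Rightarrow> action" where
  "run_action n t ini lost k i = Pprime n t i (run_states n t ini lost k i)"

definition SO :: "nat \<Rightarrow> nat \<Rightarrow> (nat \<Rightarrow> nat \<Rightarrow> nat \<Rightarrow> bool) \<Rightarrow> bool" where
  "SO n t lost = (\<exists>F \<subseteq> Agt n. card F \<le> t \<and> (\<forall>k j i. lost k j i \<longrightarrow> j \<in> F))"

definition nonfaulty :: "nat \<Rightarrow> (nat \<Rightarrow> nat \<Rightarrow> nat \<Rightarrow> bool) \<Rightarrow> nat \<Rightarrow> bool" where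
  "nonfaulty n lost i = (\<forall>k. \<forall>j \<in> Agt n. \<not> lost k i j)"

end

theory Submission
  imports Defs
begin

text \<open>
  Validity holds because only initial values are ever relayed, and no agent decides twice
  because deciding sets \<open>done\<close>.  For agreement, an agent never decides before time \<open>t + 1\<close>
  while some other agent is nonfaulty, since \<open>kfaulty\<close> only ever contains faulty agents.
  The heart of the proof is that two nonfaulty agents know the same values at time \<open>t + 1\<close>:
  a nonfaulty agent relays a value learnt at time \<open>k \<le> t\<close> to everyone in round \<open>k + 1\<close>, and a
  value learnt only at time \<open>t + 1\<close> but still hidden from a nonfaulty agent must have travelled
  along a chain of \<open>t + 1\<close> distinct faulty agents, which \<open>SO\<^sub>t\<close> rules out.
\<close>

lemma Pprime_eq_Decide_iff:
  "Pprime n t i s = Decide v \<longleftrightarrow>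
     s_done s = 0 \<and> (s_time s = t + 1 \<or> s_kfaulty s = Agt n - {i}) \<and> v = Min (s_known s)"
  by (auto simp: Pprime_def)

lemma is_decide_Pprime_iff:
  "is_decide (Pprime n t i s) \<longleftrightarrow> s_done s = 0 \<and> (s_time s = t + 1 \<or> s_kfaulty s = Agt n - {i})"
  by (auto simp: Pprime_def is_decide_def)

lemma fst_msg_subset_new: "fst (msg s a) \<subseteq> s_new s"
  by (auto simp: msg_def)

lemma snd_msg_subset_kfaulty: "snd (msg s a) \<subseteq> s_kfaulty s"
  by (auto simp: msg_def)

lemma fst_msg_undecided: "s_done s \<noteq> 1 \<Longrightarrow> \<not> is_decide a \<Longrightarrow> fst (msg s a) = s_new s"
  by (simp add: msg_def)

lemma update_fields:
  "s_known (update n s a rcv) = s_known s \<union> (\<Union>j\<in>{j \<in> Agt n. rcv j \<noteq> None}. fst (the (rcv j)))"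
  "s_new (update n s a rcv) = s_known (update n s a rcv) - s_known s"
  "s_kfaulty (update n s a rcv) =
     s_kfaulty s \<union> (Agt n - {j \<in> Agt n. rcv j \<noteq> None}) \<union>
     (\<Union>j\<in>{j \<in> Agt n. rcv j \<noteq> None}. snd (the (rcv j)))"
  "s_done (update n s a rcv) = (if is_decide a then 1 else s_done s)"
  "s_time (update n s a rcv) = Suc (s_time s)"
  by (simp_all add: update_def Let_def)

lemma SO_card_faulty_le:
  assumes "SO n t lost" "finite C" "C \<subseteq> {z. \<not> nonfaulty n lost z}"
  shows "card C \<le> t"
proof -
  obtain F where F: "F \<subseteq> Agt n" "card F \<le> t" "\<forall>k j i. lost k j i \<longrightarrow> j \<in> F"
    using assms(1) by (auto simp: SO_def)
  have "C \<subseteq> F"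
    using assms(3) F(3) by (auto simp: nonfaulty_def)
  moreover have "finite F"
    using F(1) finite_subset by (auto simp: Agt_def)
  ultimately show ?thesis
    using F(2) card_mono le_trans by blast
qed

context
  fixes n t :: nat and ini :: "nat \<Rightarrow> nat" and lost :: "nat \<Rightarrow> nat \<Rightarrow> nat \<Rightarrow> bool"
begin

abbreviation state_at :: "nat \<Rightarrow> nat \<Rightarrow> lstate" where
  "state_at k i \<equiv> run_states n t ini lost k i"

abbreviation action_at :: "nat \<Rightarrow> nat \<Rightarrow> action" where
  "action_at k i \<equiv> run_action n t ini lost k i"

abbreviation message_at :: "nat \<Rightarrow> nat \<Rightarrow> nat set \<times> nat set" where
  "message_at k j \<equiv> msg (state_at k j) (action_at k j)"

lemma state_at_Suc:
  "s_known (state_at (Suc k) i) =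
     s_known (state_at k i) \<union> (\<Union>j\<in>{j \<in> Agt n. \<not> lost k j i}. fst (message_at k j))"
  "s_new (state_at (Suc k) i) = s_known (state_at (Suc k) i) - s_known (state_at k i)"
  "s_kfaulty (state_at (Suc k) i) =
     s_kfaulty (state_at k i) \<union> {j \<in> Agt n. lost k j i} \<union>
     (\<Union>j\<in>{j \<in> Agt n. \<not> lost k j i}. snd (message_at k j))"
  "s_done (state_at (Suc k) i) = (if is_decide (action_at k i) then 1 else s_done (state_at k i))"
  "s_time (state_at (Suc k) i) = Suc (s_time (state_at k i))"
  unfolding run_states.simps update_fields run_action_def by (auto split: if_splits)

declare run_states.simps(2) [simp del]

lemma time_state_at [simp]: "s_time (state_at k i) = k"
  by (induction k) (simp_all add: initial_state_def state_at_Suc(5))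

lemma new_subset_known: "s_new (state_at k i) \<subseteq> s_known (state_at k i)"
  by (cases k) (auto simp: initial_state_def state_at_Suc)

lemma known_mono: "k \<le> k' \<Longrightarrow> s_known (state_at k i) \<subseteq> s_known (state_at k' i)"
proof (induction k' rule: dec_induct)
  case (step m)
  then show ?case
    using state_at_Suc(1)[of m i] by blast
qed simp

lemma done_mono: "k \<le> k' \<Longrightarrow> s_done (state_at k i) \<noteq> 0 \<Longrightarrow> s_done (state_at k' i) \<noteq> 0"
proof (induction k' rule: dec_induct)
  case (step m)
  then show ?case
    using state_at_Suc(4)[of m i] by auto
qed simp

lemma known_imp_new_earlier:
  "v \<in> s_known (state_at k i) \<Longrightarrow> \<exists>k'\<le>k. v \<in> s_new (state_at k' i)"
proof (induction k)
  case 0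
  then show ?case
    by (simp add: initial_state_def)
next
  case (Suc k)
  then show ?case
    by (cases "v \<in> s_known (state_at k i)") (auto simp: state_at_Suc(2) intro: le_SucI)
qed

lemma known_subset_initial_values: "s_known (state_at k i) \<subseteq> insert (ini i) (ini ` Agt n)"
proof (induction k arbitrary: i)
  case 0
  then show ?case
    by (simp add: initial_state_def)
next
  case (Suc k)
  have "fst (message_at k j) \<subseteq> ini ` Agt n" if "j \<in> Agt n" for j
    using fst_msg_subset_new new_subset_known Suc.IH[of j] that by blast
  then show ?case
    using Suc.IH[of i] by (auto simp: state_at_Suc(1))
qed

lemma kfaulty_subset_faulty:
  "i \<in> Agt n \<Longrightarrow> s_kfaulty (state_at k i) \<subseteq> {z. \<not> nonfaulty n lost z}"
proof (induction k arbitrary: i)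
  case 0
  then show ?case
    by (simp add: initial_state_def)
next
  case (Suc k)
  then show ?case
    using snd_msg_subset_kfaulty by (fastforce simp: state_at_Suc(3) nonfaulty_def)
qed

lemma kfaulty_ne_others:
  assumes "i \<in> Agt n" "z \<in> Agt n" "z \<noteq> i" "nonfaulty n lost z"
  shows "s_kfaulty (state_at k i) \<noteq> Agt n - {i}"
  using kfaulty_subset_faulty[OF assms(1), of k] assms(2-4) by blast

lemma not_done_until_deadline:
  assumes "i \<in> Agt n" "z \<in> Agt n" "z \<noteq> i" "nonfaulty n lost z"
  shows "k \<le> t + 1 \<Longrightarrow> s_done (state_at k i) = 0"
proof (induction k)
  case 0
  then show ?case
    by (simp add: initial_state_def)
next
  case (Suc k)
  then show ?case
    using kfaulty_ne_others[OF assms, of k]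
    by (simp add: state_at_Suc(4) run_action_def is_decide_Pprime_iff)
qed

lemma relays_new_before_deadline:
  assumes "i \<in> Agt n" "z \<in> Agt n" "z \<noteq> i" "nonfaulty n lost z" "k \<le> t"
  shows "fst (message_at k i) = s_new (state_at k i)"
proof (rule fst_msg_undecided)
  show "s_done (state_at k i) \<noteq> 1"
    using not_done_until_deadline[OF assms(1-4), of k] assms(5) by simp
  show "\<not> is_decide (action_at k i)"
    using kfaulty_ne_others[OF assms(1-4), of k] assms(5)
    by (simp add: run_action_def is_decide_Pprime_iff)
qed

text \<open>\<open>C\<close> consists of the faulty agents through which \<open>v\<close> was relayed to \<open>x\<close>.\<close>

lemma hidden_value_chain:
  assumes "x \<in> Agt n" "v \<in> s_new (state_at k x)"
    and "y \<in> Agt n" "nonfaulty n lost y" "v \<notin> s_known (state_at k y)"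
  shows "\<exists>C. finite C \<and> C \<subseteq> {z. \<not> nonfaulty n lost z} \<and> card C = k \<and> x \<notin> C \<and>
             (\<forall>c\<in>C. v \<in> s_known (state_at k c))"
  using assms(1,2,5)
proof (induction k arbitrary: x)
  case 0
  show ?case
    by (rule exI[of _ "{}"]) simp
next
  case (Suc k)
  have x_unaware: "v \<notin> s_known (state_at k x)"
    using Suc.prems(2) by (simp add: state_at_Suc(2))
  obtain j where j: "j \<in> Agt n" "\<not> lost k j x" "v \<in> fst (message_at k j)"
    using Suc.prems(2) x_unaware by (auto simp: state_at_Suc(1,2))
  have j_new: "v \<in> s_new (state_at k j)"
    using j(3) fst_msg_subset_new by blast
  have j_knows: "v \<in> s_known (state_at k j)"
    using j_new new_subset_known by blast
  have "v \<notin> s_known (state_at k y)"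
    using Suc.prems(3) known_mono[of k "Suc k" y] by auto
  then obtain C where C: "finite C" "C \<subseteq> {z. \<not> nonfaulty n lost z}" "card C = k" "j \<notin> C"
      "\<forall>c\<in>C. v \<in> s_known (state_at k c)"
    using Suc.IH[OF j(1) j_new] by blast
  have "\<not> nonfaulty n lost j"
  proof
    assume "nonfaulty n lost j"
    then have "\<not> lost k j y"
      using assms(3) by (simp add: nonfaulty_def)
    then show False
      using j(1,3) Suc.prems(3) by (auto simp: state_at_Suc(1))
  qed
  then show ?case
    using C x_unaware j_knows known_mono[of k "Suc k"]
    by (intro exI[of _ "insert j C"]) auto
qed

lemma known_at_deadline_shared:
  assumes "SO n t lost" "i \<in> Agt n" "j \<in> Agt n" "i \<noteq> j"
    and "nonfaulty n lost i" "nonfaulty n lost j"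
    and "v \<in> s_known (state_at (t + 1) i)"
  shows "v \<in> s_known (state_at (t + 1) j)"
proof -
  obtain k where k: "k \<le> t + 1" "v \<in> s_new (state_at k i)"
    using known_imp_new_earlier[OF assms(7)] by blast
  show ?thesis
  proof (cases "k = t + 1")
    case True
    show ?thesis
    proof (rule ccontr)
      assume "v \<notin> s_known (state_at (t + 1) j)"
      then obtain C where "finite C" "C \<subseteq> {z. \<not> nonfaulty n lost z}" "card C = t + 1"
        using hidden_value_chain[OF assms(2) k(2)[unfolded True] assms(3,6)] by blast
      then show False
        using SO_card_faulty_le[OF assms(1)] by fastforce
    qed
  next
    case False
    then have "k \<le> t"
      using k(1) by simp
    then have "fst (message_at k i) = s_new (state_at k i)"
      using relays_new_before_deadline assms(2-4,6) by blast
    moreover have "\<not> lost k i j"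
      using assms(3,5) by (simp add: nonfaulty_def)
    ultimately have "v \<in> s_known (state_at (Suc k) j)"
      using assms(2) k(2) by (auto simp: state_at_Suc(1))
    then show ?thesis
      using known_mono[of "Suc k" "t + 1" j] \<open>k \<le> t\<close> by auto
  qed
qed

lemma decides_at_most_once:
  assumes "action_at m i = Decide v" "action_at m' i = Decide v'"
  shows "m = m'"
proof -
  have done_after_decision: "s_done (state_at k' i) \<noteq> 0"
    if "action_at k i = Decide w" "k < k'" for k k' w
  proof -
    have "s_done (state_at (Suc k) i) \<noteq> 0"
      using that(1) by (simp add: state_at_Suc(4) is_decide_def)
    then show ?thesis
      using done_mono[of "Suc k" k'] that(2) by simp
  qed
  have "s_done (state_at m i) = 0" "s_done (state_at m' i) = 0"
    using assms by (simp_all add: run_action_def Pprime_eq_Decide_iff)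
  then show ?thesis
    using done_after_decision assms by (metis linorder_neqE_nat)
qed

lemma decision_valid:
  assumes "i \<in> Agt n" "action_at m i = Decide v"
  shows "\<exists>j \<in> Agt n. ini j = v"
proof -
  have v: "v = Min (s_known (state_at m i))"
    using assms(2) by (simp add: run_action_def Pprime_eq_Decide_iff)
  have known: "s_known (state_at m i) \<subseteq> insert (ini i) (ini ` Agt n)"
    by (rule known_subset_initial_values)
  have "ini i \<in> s_known (state_at m i)"
    using known_mono[of 0 m i] by (simp add: initial_state_def)
  then have "v \<in> s_known (state_at m i)"
    unfolding v using finite_subset[OF known] by (intro Min_in) (auto simp: Agt_def)
  then show ?thesis
    using known assms(1) by blast
qed

lemma simultaneous_agreement:
  assumes "SO n t lost" "i \<in> Agt n" "j \<in> Agt n"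
    and "nonfaulty n lost i" "nonfaulty n lost j" "action_at m i = Decide v"
  shows "action_at m j = Decide v"
proof (cases "i = j")
  case True
  then show ?thesis
    using assms(6) by simp
next
  case False
  have i_decides: "s_time (state_at m i) = t + 1 \<or> s_kfaulty (state_at m i) = Agt n - {i}"
      "v = Min (s_known (state_at m i))"
    using assms(6) by (simp_all add: run_action_def Pprime_eq_Decide_iff)
  then have m: "m = t + 1"
    using kfaulty_ne_others[OF assms(2,3) False[symmetric] assms(5)] by auto
  have "s_done (state_at m j) = 0"
    using not_done_until_deadline[OF assms(3,2) False assms(4)] m by simp
  moreover have "s_known (state_at m j) = s_known (state_at m i)"
    using known_at_deadline_shared[OF assms(1)] assms(2-5) False m by blast
  ultimately show ?thesis
    using i_decides(2) m by (simp add: run_action_def Pprime_eq_Decide_iff)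
qed

end

theorem proposition17:
  fixes n t :: nat and ini :: "nat \<Rightarrow> nat" and lost :: "nat \<Rightarrow> nat \<Rightarrow> nat \<Rightarrow> bool"
  assumes "t \<le> n"
    and "\<forall>i \<in> Agt n. ini i \<in> {0, 1}"
    and "SO n t lost"
  shows "(\<forall>i \<in> Agt n. \<forall>m m' v v'. run_action n t ini lost m i = Decide v \<and>
                                  run_action n t ini lost m' i = Decide v' \<longrightarrow> m = m')
       \<and> (\<forall>i \<in> Agt n. \<forall>j \<in> Agt n. \<forall>m v. nonfaulty n lost i \<and> nonfaulty n lost j \<and>
              run_action n t ini lost m i = Decide v \<longrightarrow> run_action n t ini lost m j = Decide v)
       \<and> (\<forall>i \<in> Agt n. \<forall>m v. nonfaulty n lost i \<and> run_action n t ini lost m i = Decide v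
              \<longrightarrow> (\<exists>j \<in> Agt n. ini j = v))"
proof (intro conjI ballI allI impI)
  show "m = m'"
    if "run_action n t ini lost m i = Decide v \<and> run_action n t ini lost m' i = Decide v'"
    for i m m' v v'
    using that decides_at_most_once by blast
  show "run_action n t ini lost m j = Decide v"
    if "i \<in> Agt n" "j \<in> Agt n"
      and "nonfaulty n lost i \<and> nonfaulty n lost j \<and> run_action n t ini lost m i = Decide v"
    for i j m v
    using that simultaneous_agreement[OF assms(3)] by blast
  show "\<exists>j \<in> Agt n. ini j = v"
    if "i \<in> Agt n" "nonfaulty n lost i \<and> run_action n t ini lost m i = Decide v" for i m v
    using that decision_valid by blast
qed

end
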